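(* Let $\alpha\le 2$ and $\delta\ge 0$, where if $\alpha\neq0$ we additionally require $\delta\le 1/\alpha^2$. Let $$c(u,v)=1+\alpha^2\delta(1-2u)(1-2v)\exp\{\alpha(u-u^2+v-v^2)\},\quad (u,v)\in[0,1]^2.$$ Then $c$ is totally positive of order 2 ($TP_2$), i.e. $c(u_1,v_1)c(u_2,v_2)-c(u_1,v_2)c(u_2,v_1)\ge0$ for all $u_1<u_2$, $v_1<v_2$ in $[0,1]$; in fact $\frac{\partial^2\ln c(u,v)}{\partial u\,\partial v}\ge 0$ on $[0,1]^2$.
   Context: $c$ is the density of the copula $C(u,v)=uv+\delta(1-e^{\alpha(u-u^2)})(1-e^{\alpha(v-v^2)})$; the constraint $|\delta|\le1/\alpha^2$ (for $\alpha\le2$, $\alpha\ne0$) is the parameter range for which $C$ is a copula, and for $\alpha=0$ any $\delta$ is allowed. *)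

theory Defs
  imports "HOL-Analysis.Analysis"
begin

definition cdens :: "real \<Rightarrow> real \<Rightarrow> real \<Rightarrow> real \<Rightarrow> real" where
  "cdens \<alpha> \<delta> u v = 1 + \<alpha>^2 * \<delta> * (1 - 2 * u) * (1 - 2 * v) * exp (\<alpha> * (u - u^2 + v - v^2))"

end

theory Submission
  imports Defs
begin

text \<open>The density has the product form \<open>c(u,v) = 1 + k f(u) f(v)\<close> with \<open>k = \<alpha>\<^sup>2\<delta> \<ge> 0\<close> and
  \<open>f(u) = (1 - 2u) exp(\<alpha>(u - u\<^sup>2))\<close>. For such a kernel the 2x2 minor equals
  \<open>k (f(u\<^sub>2) - f(u\<^sub>1)) (f(v\<^sub>2) - f(v\<^sub>1))\<close> and the mixed derivative of \<open>ln c\<close> equals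
  \<open>k f'(u) f'(v) / c(u,v)\<^sup>2\<close>. Both are nonnegative because
  \<open>f'(u) = exp(\<alpha>(u - u\<^sup>2)) (\<alpha>(1 - 2u)\<^sup>2 - 2) \<le> 0\<close> on \<open>[0,1]\<close> when \<open>\<alpha> \<le> 2\<close>.\<close>

lemma product_kernel_TP2:
  fixes f g :: "real \<Rightarrow> real"
  assumes "k \<ge> 0" and "(f u2 - f u1) * (g v2 - g v1) \<ge> 0"
  shows "(1 + k * f u1 * g v1) * (1 + k * f u2 * g v2) - (1 + k * f u1 * g v2) * (1 + k * f u2 * g v1) \<ge> 0"
proof -
  have "(1 + k * f u1 * g v1) * (1 + k * f u2 * g v2) - (1 + k * f u1 * g v2) * (1 + k * f u2 * g v1)
      = k * ((f u2 - f u1) * (g v2 - g v1))"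
    by (simp add: algebra_simps)
  then show ?thesis using assms by simp
qed

lemma deriv_ln_product_kernel:
  fixes g :: "real \<Rightarrow> real"
  assumes "(g has_field_derivative g') (at v)" and "0 < 1 + c * g v"
  shows "deriv (\<lambda>y. ln (1 + c * g y)) v = c * g' / (1 + c * g v)"
proof (rule DERIV_imp_deriv)
  have "((\<lambda>y. 1 + c * g y) has_field_derivative c * g') (at v)"
    by (rule derivative_eq_intros assms(1) refl)+ simp
  from DERIV_chain2[OF DERIV_ln_divide[OF assms(2)] this]
  show "((\<lambda>y. ln (1 + c * g y)) has_field_derivative c * g' / (1 + c * g v)) (at v)"
    by simp
qed

lemma mixed_deriv_ln_product_kernel:
  fixes f g f' :: "real \<Rightarrow> real"
  assumes f: "\<And>x. (f has_field_derivative f' x) (at x)"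
    and g: "(g has_field_derivative g') (at v)"
    and pos: "0 < 1 + k * f u * g v"
  shows "deriv (\<lambda>x. deriv (\<lambda>y. ln (1 + k * f x * g y)) v) u = k * f' u * g' / (1 + k * f u * g v)^2"
proof (rule DERIV_imp_deriv)
  define h where "h x = 1 + k * f x * g v" for x
  define S where "S = {x. 0 < h x}"
  have "continuous_on UNIV f"
    using f by (meson DERIV_isCont continuous_at_imp_continuous_on)
  then have "open S"
    unfolding S_def h_def by (intro open_Collect_less continuous_intros) auto
  have "u \<in> S" using pos unfolding S_def h_def by simp
  have inner: "deriv (\<lambda>y. ln (1 + k * f x * g y)) v = k * g' * (f x / h x)" if "x \<in> S" for x
    using deriv_ln_product_kernel[OF g, of "k * f x"] that
    unfolding S_def h_def by (simp add: mult.assoc mult.left_commute)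
  have "(h has_field_derivative k * f' u * g v) (at u)"
    unfolding h_def by (rule derivative_eq_intros f refl)+ simp
  from DERIV_divide[OF f this] have "((\<lambda>x. f x / h x) has_field_derivative
      (f' u * h u - f u * (k * f' u * g v)) / (h u * h u)) (at u)"
    using \<open>u \<in> S\<close> unfolding S_def by simp
  from DERIV_cmult[OF this, of "k * g'"]
  have "((\<lambda>x. k * g' * (f x / h x)) has_field_derivative k * f' u * g' / (h u)^2) (at u)"
    by (simp add: h_def power2_eq_square algebra_simps)
  then show "((\<lambda>x. deriv (\<lambda>y. ln (1 + k * f x * g y)) v) has_field_derivative
      k * f' u * g' / (1 + k * f u * g v)^2) (at u)"
    unfolding h_def
    by (rule has_field_derivative_transform_within_open[OF _ \<open>open S\<close> \<open>u \<in> S\<close>])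
      (simp add: inner h_def)
qed

text \<open>\<open>-\<alpha> * cdens_factor \<alpha>\<close> is the derivative of the generator \<open>1 - exp(\<alpha>(u - u\<^sup>2))\<close> of the copula.\<close>

definition cdens_factor :: "real \<Rightarrow> real \<Rightarrow> real" where
  "cdens_factor a u = (1 - 2 * u) * exp (a * (u - u^2))"

definition cdens_factor_deriv :: "real \<Rightarrow> real \<Rightarrow> real" where
  "cdens_factor_deriv a u = exp (a * (u - u^2)) * (a * (1 - 2 * u)^2 - 2)"

lemma cdens_eq_product_kernel:
  "cdens a d u v = 1 + a^2 * d * cdens_factor a u * cdens_factor a v"
  unfolding cdens_def cdens_factor_def
  by (simp add: exp_add[symmetric] algebra_simps)

lemma has_field_derivative_cdens_factor:
  "(cdens_factor a has_field_derivative cdens_factor_deriv a u) (at u)"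
  unfolding cdens_factor_def cdens_factor_deriv_def
  by (auto intro!: derivative_eq_intros simp: power2_eq_square algebra_simps)

lemma cdens_factor_deriv_nonpos:
  assumes "a \<le> 2" and "0 \<le> u" and "u \<le> 1"
  shows "cdens_factor_deriv a u \<le> 0"
proof -
  have "u * u \<le> u" using assms(2,3) by (simp add: mult_left_le)
  then have "(1 - 2 * u)^2 \<le> 1" by (simp add: power2_eq_square algebra_simps)
  then have "a * (1 - 2 * u)^2 \<le> 2"
  proof (cases "a \<ge> 0")
    case True
    then have "a * (1 - 2 * u)^2 \<le> a"
      using \<open>(1 - 2 * u)^2 \<le> 1\<close> mult_left_mono[of _ 1 a] by simp
    then show ?thesis using assms(1) by simp
  next
    case False
    then show ?thesis by (simp add: mult_nonpos_nonneg order_trans[of _ 0 2])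
  qed
  then show ?thesis
    unfolding cdens_factor_deriv_def by (simp add: mult_nonneg_nonpos)
qed

lemma cdens_factor_antimono:
  assumes "a \<le> 2" and "0 \<le> x" and "x \<le> y" and "y \<le> 1"
  shows "cdens_factor a y \<le> cdens_factor a x"
  using DERIV_nonpos_imp_nonincreasing[of x y "cdens_factor a"] assms
    has_field_derivative_cdens_factor cdens_factor_deriv_nonpos
  by (metis order_trans)

text \<open>The bound \<open>\<delta> \<le> 1/\<alpha>\<^sup>2\<close> only makes \<open>c\<close> nonnegative.\<close>

theorem proposition3:
  fixes \<alpha> \<delta> :: real
  assumes "\<alpha> \<le> 2" and "\<delta> \<ge> 0" and "\<alpha> \<noteq> 0 \<Longrightarrow> \<delta> \<le> 1 / \<alpha>^2"
  shows "(\<forall>u1 u2 v1 v2. 0 \<le> u1 \<longrightarrow> u1 < u2 \<longrightarrow> u2 \<le> 1 \<longrightarrow> 0 \<le> v1 \<longrightarrow> v1 < v2 \<longrightarrow> v2 \<le> 1 \<longrightarrow>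
            cdens \<alpha> \<delta> u1 v1 * cdens \<alpha> \<delta> u2 v2 - cdens \<alpha> \<delta> u1 v2 * cdens \<alpha> \<delta> u2 v1 \<ge> 0)
       \<and> (\<forall>u v. u \<in> {0..1} \<longrightarrow> v \<in> {0..1} \<longrightarrow> cdens \<alpha> \<delta> u v > 0 \<longrightarrow>
            deriv (\<lambda>x. deriv (\<lambda>y. ln (cdens \<alpha> \<delta> x y)) v) u \<ge> 0)"
proof -
  define k where "k = \<alpha>^2 * \<delta>"
  have "k \<ge> 0" unfolding k_def using assms(2) by simp
  have tp2: "cdens \<alpha> \<delta> u1 v1 * cdens \<alpha> \<delta> u2 v2 - cdens \<alpha> \<delta> u1 v2 * cdens \<alpha> \<delta> u2 v1 \<ge> 0"
    if "0 \<le> u1" "u1 < u2" "u2 \<le> 1" "0 \<le> v1" "v1 < v2" "v2 \<le> 1" for u1 u2 v1 v2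
    unfolding cdens_eq_product_kernel
    using that assms(1) \<open>k \<ge> 0\<close> cdens_factor_antimono[of \<alpha> u1 u2] cdens_factor_antimono[of \<alpha> v1 v2]
    by (intro product_kernel_TP2) (auto simp: k_def intro: mult_nonpos_nonpos)
  have log_supermodular: "deriv (\<lambda>x. deriv (\<lambda>y. ln (cdens \<alpha> \<delta> x y)) v) u \<ge> 0"
    if "u \<in> {0..1}" "v \<in> {0..1}" "cdens \<alpha> \<delta> u v > 0" for u v
  proof -
    have "deriv (\<lambda>x. deriv (\<lambda>y. ln (cdens \<alpha> \<delta> x y)) v) u
        = k * cdens_factor_deriv \<alpha> u * cdens_factor_deriv \<alpha> v / (cdens \<alpha> \<delta> u v)^2"
      using that(3) unfolding cdens_eq_product_kernel k_def
      by (intro mixed_deriv_ln_product_kernel has_field_derivative_cdens_factor)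
    moreover have "cdens_factor_deriv \<alpha> u * cdens_factor_deriv \<alpha> v \<ge> 0"
      using that assms(1) cdens_factor_deriv_nonpos by (simp add: mult_nonpos_nonpos)
    ultimately show ?thesis using \<open>k \<ge> 0\<close> by (simp add: mult.assoc)
  qed
  show ?thesis using tp2 log_supermodular by blast
qed

end
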